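(* Let $\mathbf{x}_1,\ldots,\mathbf{x}_n\in\mathbb{R}^p$, let $\|\cdot\|$ be an arbitrary norm on $\mathbb{R}^p$, and let $w_{ij}\ge 0$ ($1\le i<j\le n$) be weights. Consider the graph on vertex set $\{1,\dots,n\}$ with an edge between $i$ and $j$ whenever $w_{ij}>0$, and suppose this graph is connected. Let $\bar{\mathbf{x}}=\frac1n\sum_{i=1}^n\mathbf{x}_i$ and let $\bar{\mathbf{X}}\in\mathbb{R}^{p\times n}$ be the matrix each of whose columns equals $\bar{\mathbf{x}}$. Then there exists $\gamma_0\ge 0$ such that for all $\gamma\ge\gamma_0$, $\bar{\mathbf{X}}$ minimizes $$F_\gamma(\mathbf{U})=\frac12\sum_{i=1}^n\|\mathbf{x}_i-\mathbf{u}_i\|_2^2+\gamma\sum_{i<j}w_{ij}\|\mathbf{u}_i-\mathbf{u}_j\|.$$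
   Context: $\mathbf{U}=(\mathbf{u}_1,\ldots,\mathbf{u}_n)\in\mathbb{R}^{p\times n}$ with $\mathbf{u}_i$ its $i$th column. *)

theory Defs
  imports "HOL-Analysis.Analysis"
begin

definition is_norm :: "(real^'p \<Rightarrow> real) \<Rightarrow> bool" where
  "is_norm N \<longleftrightarrow>
     (\<forall>v. 0 \<le> N v) \<and> (\<forall>v. N v = 0 \<longleftrightarrow> v = 0) \<and>
     (\<forall>c v. N (c *\<^sub>R v) = \<bar>c\<bar> * N v) \<and> (\<forall>v u. N (v + u) \<le> N v + N u)"

definition weight_edge :: "nat \<Rightarrow> (nat \<Rightarrow> nat \<Rightarrow> real) \<Rightarrow> nat \<Rightarrow> nat \<Rightarrow> bool" where
  "weight_edge n w a b \<longleftrightarrow> a \<in> {1..n} \<and> b \<in> {1..n} \<and>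
     ((a < b \<and> w a b > 0) \<or> (b < a \<and> w b a > 0))"

definition weight_graph_connected :: "nat \<Rightarrow> (nat \<Rightarrow> nat \<Rightarrow> real) \<Rightarrow> bool" where
  "weight_graph_connected n w \<longleftrightarrow>
     (\<forall>i\<in>{1..n}. \<forall>j\<in>{1..n}. (weight_edge n w)\<^sup>*\<^sup>* i j)"

definition clust_obj :: "(real^'p \<Rightarrow> real) \<Rightarrow> nat \<Rightarrow> (nat \<Rightarrow> nat \<Rightarrow> real)
     \<Rightarrow> (nat \<Rightarrow> real^'p) \<Rightarrow> real \<Rightarrow> (nat \<Rightarrow> real^'p) \<Rightarrow> real" where
  "clust_obj N n w x \<gamma> U =
     1/2 * (\<Sum>i=1..n. (norm (x i - U i))\<^sup>2)
     + \<gamma> * (\<Sum>(i,j)\<in>{(i,j). 1 \<le> i \<and> i < j \<and> j \<le> n}. w i j * N (U i - U j))"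

definition mean_vec :: "nat \<Rightarrow> (nat \<Rightarrow> real^'p) \<Rightarrow> real^'p" where
  "mean_vec n x = (1 / real n) *\<^sub>R (\<Sum>i=1..n. x i)"

end

theory Submission
  imports Defs
begin

text \<open>Let \<open>m\<close> be the mean, \<open>M\<close> the matrix with all columns \<open>m\<close>, and \<open>a\<^sub>i = x\<^sub>i - m\<close>.
  Expanding the squares and using \<open>\<Sum> a\<^sub>i = 0\<close> gives
  \<open>F\<^sub>\<gamma>(U) - F\<^sub>\<gamma>(M) \<ge> -\<Sum> a\<^sub>i \<bullet> (u\<^sub>i - u\<^sub>1) + \<gamma> P(U)\<close>, where \<open>P\<close> is the fusion penalty.
  Along a path of positive weights from \<open>1\<close> to \<open>i\<close>, the triangle inequality bounds
  \<open>\<parallel>u\<^sub>i - u\<^sub>1\<parallel>\<close> by a multiple of \<open>P(U)\<close>, and in finite dimension the Euclidean norm is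
  dominated by a multiple of \<open>\<parallel>\<cdot>\<parallel>\<close>. Hence the linear term is at most \<open>G P(U)\<close> for a
  constant \<open>G\<close>, and every \<open>\<gamma> \<ge> G\<close> works.\<close>

lemma is_norm_zero: "is_norm N \<Longrightarrow> N 0 = 0"
  and is_norm_nonneg: "is_norm N \<Longrightarrow> 0 \<le> N v"
  and is_norm_eq_0: "is_norm N \<Longrightarrow> N v = 0 \<longleftrightarrow> v = 0"
  and is_norm_scaleR: "is_norm N \<Longrightarrow> N (c *\<^sub>R v) = \<bar>c\<bar> * N v"
  and is_norm_triangle: "is_norm N \<Longrightarrow> N (u + v) \<le> N u + N v"
  unfolding is_norm_def by auto

lemma is_norm_minus_commute:
  assumes "is_norm N"
  shows "N (u - v) = N (v - u)"
  using is_norm_scaleR[OF assms, of "-1" "v - u"] by simp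

lemma is_norm_sum_le:
  assumes "is_norm N"
  shows "N (\<Sum>i\<in>A. f i) \<le> (\<Sum>i\<in>A. N (f i))"
proof (induction A rule: infinite_finite_induct)
  case (insert a A)
  then show ?case using is_norm_triangle[OF assms, of "f a" "sum f A"] by simp
qed (simp_all add: is_norm_zero[OF assms])

lemma is_norm_le_norm:
  assumes "is_norm N"
  shows "N v \<le> (\<Sum>i\<in>UNIV. N (axis i 1)) * norm (v::real^'p)"
proof -
  have "N v = N (\<Sum>i\<in>UNIV. (v$i) *\<^sub>R axis i 1)"
    using basis_expansion[of v] by (simp add: scalar_mult_eq_scaleR)
  also have "\<dots> \<le> (\<Sum>i\<in>UNIV. N ((v$i) *\<^sub>R axis i 1))"
    by (rule is_norm_sum_le[OF assms])
  also have "\<dots> = (\<Sum>i\<in>UNIV. \<bar>v$i\<bar> * N (axis i 1))"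
    by (simp add: is_norm_scaleR[OF assms])
  also have "\<dots> \<le> (\<Sum>i\<in>UNIV. norm v * N (axis i 1))"
    by (intro sum_mono mult_right_mono component_le_norm_cart is_norm_nonneg[OF assms])
  finally show ?thesis by (simp add: sum_distrib_left mult.commute)
qed

lemma is_norm_lipschitz:
  assumes "is_norm N"
  shows "(\<Sum>i\<in>UNIV. N (axis i 1))-lipschitz_on (UNIV :: (real^'p) set) N"
proof (rule lipschitz_onI)
  fix u v :: "real^'p"
  have "N u \<le> N (u - v) + N v" "N v \<le> N (v - u) + N u"
    using is_norm_triangle[OF assms, of "u - v" v] is_norm_triangle[OF assms, of "v - u" u] by simp_all
  then have "dist (N u) (N v) \<le> N (u - v)"
    using is_norm_minus_commute[OF assms, of u v] by (simp add: dist_real_def abs_le_iff)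
  also have "\<dots> \<le> (\<Sum>i\<in>UNIV. N (axis i 1)) * dist u v"
    using is_norm_le_norm[OF assms] by (simp add: dist_norm)
  finally show "dist (N u) (N v) \<le> (\<Sum>i\<in>UNIV. N (axis i 1)) * dist u v" .
qed (simp add: sum_nonneg is_norm_nonneg[OF assms])

text \<open>Equivalence of norms in finite dimension: \<open>N\<close> attains a positive minimum on the
  Euclidean unit sphere.\<close>
lemma norm_le_is_norm:
  assumes "is_norm N"
  obtains C where "C > 0" "\<And>v::real^'p. norm v \<le> C * N v"
proof -
  have "axis undefined 1 \<in> sphere (0::real^'p) 1" by simp
  then have "sphere (0::real^'p) 1 \<noteq> {}" by blast
  moreover have "continuous_on (sphere 0 1) N"
    using lipschitz_on_continuous_on[OF is_norm_lipschitz[OF assms]] continuous_on_subset by blast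
  ultimately obtain v0 :: "real^'p" where v0: "norm v0 = 1" "\<And>v. norm v = 1 \<Longrightarrow> N v0 \<le> N v"
    using continuous_attains_inf[OF compact_sphere] by (metis mem_sphere_0)
  have pos: "N v0 > 0"
    using v0(1) is_norm_nonneg[OF assms, of v0] is_norm_eq_0[OF assms, of v0]
    by (auto simp: less_eq_real_def)
  have "norm v \<le> 1 / N v0 * N v" for v :: "real^'p"
  proof (cases "v = 0")
    case False
    then have "N v0 \<le> N ((1 / norm v) *\<^sub>R v)" by (intro v0(2)) simp
    then show ?thesis using pos False by (simp add: is_norm_scaleR[OF assms] field_simps)
  qed (simp add: is_norm_zero[OF assms])
  with pos show ?thesis by (intro that[of "1 / N v0"]) simp_all
qed

definition ordered_pairs :: "nat \<Rightarrow> (nat \<times> nat) set" where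
  "ordered_pairs n = {(i,j). 1 \<le> i \<and> i < j \<and> j \<le> n}"

definition fusion_penalty :: "(real^'p \<Rightarrow> real) \<Rightarrow> nat \<Rightarrow> (nat \<Rightarrow> nat \<Rightarrow> real)
    \<Rightarrow> (nat \<Rightarrow> real^'p) \<Rightarrow> real" where
  "fusion_penalty N n w U = (\<Sum>(i,j)\<in>ordered_pairs n. w i j * N (U i - U j))"

lemma clust_obj_eq_fusion_penalty:
  "clust_obj N n w x \<gamma> U = 1/2 * (\<Sum>i=1..n. (norm (x i - U i))\<^sup>2) + \<gamma> * fusion_penalty N n w U"
  unfolding clust_obj_def fusion_penalty_def ordered_pairs_def ..

lemma finite_ordered_pairs: "finite (ordered_pairs n)"
  unfolding ordered_pairs_def by (rule finite_subset[of _ "{1..n} \<times> {1..n}"]) auto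

lemma weighted_term_le_fusion_penalty:
  assumes N: "is_norm N"
    and w: "\<And>i j. 1 \<le> i \<Longrightarrow> i < j \<Longrightarrow> j \<le> n \<Longrightarrow> w i j \<ge> 0"
    and ij: "(i, j) \<in> ordered_pairs n"
  shows "w i j * N (U i - U j) \<le> fusion_penalty N n w U"
  unfolding fusion_penalty_def
  using member_le_sum[where f="\<lambda>(i,j). w i j * N (U i - U j)", OF ij _ finite_ordered_pairs] w
  by (force simp: ordered_pairs_def intro: mult_nonneg_nonneg is_norm_nonneg[OF N])

lemma fusion_penalty_nonneg:
  assumes "is_norm N" "\<And>i j. 1 \<le> i \<Longrightarrow> i < j \<Longrightarrow> j \<le> n \<Longrightarrow> w i j \<ge> 0"
  shows "0 \<le> fusion_penalty N n w U"
  unfolding fusion_penalty_def ordered_pairs_def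
  using assms by (auto intro!: sum_nonneg mult_nonneg_nonneg simp: is_norm_nonneg)

lemma weight_edge_le_fusion_penalty:
  fixes N :: "real^'p \<Rightarrow> real"
  assumes N: "is_norm N"
    and w: "\<And>i j. 1 \<le> i \<Longrightarrow> i < j \<Longrightarrow> j \<le> n \<Longrightarrow> w i j \<ge> 0"
    and e: "weight_edge n w a b"
  obtains k where "k \<ge> 0" "\<And>U. N (U b - U a) \<le> k * fusion_penalty N n w U"
proof -
  obtain i j where ij: "{i, j} = {a, b}" "(i, j) \<in> ordered_pairs n" "w i j > 0"
    using e unfolding weight_edge_def ordered_pairs_def by auto
  have "N (U b - U a) = N (U i - U j)" for U :: "nat \<Rightarrow> real^'p"
    using ij(1) is_norm_minus_commute[OF N] by (auto simp: doubleton_eq_iff)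
  then have "N (U b - U a) \<le> 1 / w i j * fusion_penalty N n w U" for U
    using weighted_term_le_fusion_penalty[where w=w and U=U, OF N w ij(2)] ij(3) by (simp add: field_simps)
  with ij(3) show ?thesis by (intro that[of "1 / w i j"]) simp_all
qed

lemma reachable_le_fusion_penalty:
  assumes N: "is_norm N"
    and w: "\<And>i j. 1 \<le> i \<Longrightarrow> i < j \<Longrightarrow> j \<le> n \<Longrightarrow> w i j \<ge> 0"
    and "(weight_edge n w)\<^sup>*\<^sup>* a b"
  shows "\<exists>K\<ge>0. \<forall>U. N (U b - U a) \<le> K * fusion_penalty N n w U"
  using assms(3)
proof (induction rule: rtranclp_induct)
  case base
  show ?case by (intro exI[of _ 0]) (simp add: is_norm_zero[OF N])
next
  case (step b c)
  obtain k where k: "k \<ge> 0" "\<And>U. N (U c - U b) \<le> k * fusion_penalty N n w U"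
    using weight_edge_le_fusion_penalty[where w=w, OF N w step(2)] by blast
  obtain K where K: "K \<ge> 0" "\<And>U. N (U b - U a) \<le> K * fusion_penalty N n w U"
    using step(3) by blast
  have "N (U c - U a) \<le> (k + K) * fusion_penalty N n w U" for U
    using is_norm_triangle[OF N, of "U c - U b" "U b - U a"] k(2)[of U] K(2)[of U]
    by (simp add: distrib_right)
  with k(1) K(1) show ?case by (intro exI[of _ "k + K"]) simp
qed

lemma inner_sum_le_fusion_penalty:
  fixes a :: "nat \<Rightarrow> real^'p"
  assumes N: "is_norm N"
    and w: "\<And>i j. 1 \<le> i \<Longrightarrow> i < j \<Longrightarrow> j \<le> n \<Longrightarrow> w i j \<ge> 0"
    and conn: "weight_graph_connected n w"
  obtains G where "G \<ge> 0" "\<And>U. (\<Sum>i=1..n. a i \<bullet> (U i - U 1)) \<le> G * fusion_penalty N n w U"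
proof -
  have "\<forall>i\<in>{1..n}. \<exists>K\<ge>0. \<forall>U. N (U i - U 1) \<le> K * fusion_penalty N n w U"
  proof
    fix i assume i: "i \<in> {1..n}"
    then have "1 \<in> {1..n}" by simp
    with i conn have "(weight_edge n w)\<^sup>*\<^sup>* 1 i" unfolding weight_graph_connected_def by blast
    then show "\<exists>K\<ge>0. \<forall>U. N (U i - U 1) \<le> K * fusion_penalty N n w U"
      using reachable_le_fusion_penalty[where w=w, OF N w] by blast
  qed
  then obtain K where K: "\<And>i. i \<in> {1..n} \<Longrightarrow> K i \<ge> 0"
    "\<And>i U. i \<in> {1..n} \<Longrightarrow> N (U i - U 1) \<le> K i * fusion_penalty N n w U"
    by metis
  obtain C where C: "C > 0" "\<And>v::real^'p. norm v \<le> C * N v"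
    using norm_le_is_norm[OF N] by blast
  define G where "G = (\<Sum>i=1..n. C * norm (a i) * K i)"
  have "(\<Sum>i=1..n. a i \<bullet> (U i - U 1)) \<le> G * fusion_penalty N n w U" for U
  proof -
    have "a i \<bullet> (U i - U 1) \<le> C * norm (a i) * K i * fusion_penalty N n w U"
      if i: "i \<in> {1..n}" for i
    proof -
      have "a i \<bullet> (U i - U 1) \<le> norm (a i) * norm (U i - U 1)" by (rule norm_cauchy_schwarz)
      also have "\<dots> \<le> norm (a i) * (C * N (U i - U 1))" by (simp add: C(2) mult_left_mono)
      also have "\<dots> \<le> norm (a i) * (C * (K i * fusion_penalty N n w U))"
        using C(1) K(2)[OF i] by (simp add: mult_left_mono)
      finally show ?thesis by (simp add: algebra_simps)
    qed
    then have "(\<Sum>i=1..n. a i \<bullet> (U i - U 1))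
        \<le> (\<Sum>i=1..n. C * norm (a i) * K i * fusion_penalty N n w U)"
      by (rule sum_mono)
    then show ?thesis by (simp add: G_def sum_distrib_right)
  qed
  moreover have "0 \<le> G"
    unfolding G_def using C K by (auto intro!: sum_nonneg)
  ultimately show ?thesis by (rule that[rotated])
qed

lemma sum_deviation_mean_vec:
  assumes "n > 0"
  shows "(\<Sum>i=1..n. x i - mean_vec n x) = 0"
  using assms by (simp add: sum_subtractf sum_constant_scaleR mean_vec_def del: sum_constant)

text \<open>The shift by \<open>u\<^sub>1\<close> is free because the deviations from the mean sum to zero.\<close>
lemma sum_sq_dist_ge:
  fixes x U :: "nat \<Rightarrow> real^'p"
  assumes "n > 0"
  defines "a \<equiv> \<lambda>i. x i - mean_vec n x"
  shows "(\<Sum>i=1..n. (norm (x i - U i))\<^sup>2)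
    \<ge> (\<Sum>i=1..n. (norm (a i))\<^sup>2) - 2 * (\<Sum>i=1..n. a i \<bullet> (U i - U 1))"
proof -
  have expand: "(norm (x i - U i))\<^sup>2
      = (norm (a i))\<^sup>2 + 2 * (a i \<bullet> (mean_vec n x - U i)) + (norm (mean_vec n x - U i))\<^sup>2" for i
  proof -
    have split: "x i - U i = a i + (mean_vec n x - U i)" unfolding a_def by simp
    show ?thesis unfolding split using dot_norm[of "a i" "mean_vec n x - U i"] by (simp add: field_simps)
  qed
  have "(\<Sum>i=1..n. a i \<bullet> (mean_vec n x - U i))
      = (\<Sum>i=1..n. a i) \<bullet> (mean_vec n x - U 1) - (\<Sum>i=1..n. a i \<bullet> (U i - U 1))"
    by (simp add: inner_sum_left sum_subtractf[symmetric] inner_diff_right)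
  also have "(\<Sum>i=1..n. a i) = 0"
    unfolding a_def by (rule sum_deviation_mean_vec[OF assms(1)])
  finally have "(\<Sum>i=1..n. a i \<bullet> (mean_vec n x - U i)) = - (\<Sum>i=1..n. a i \<bullet> (U i - U 1))"
    by simp
  then show ?thesis
    unfolding expand by (simp add: sum.distrib sum_distrib_left[symmetric] sum_nonneg)
qed

theorem proposition2:
  fixes x :: "nat \<Rightarrow> real^'p" and N :: "real^'p \<Rightarrow> real"
    and w :: "nat \<Rightarrow> nat \<Rightarrow> real" and n :: nat
  assumes "is_norm N"
    and "\<And>i j. 1 \<le> i \<Longrightarrow> i < j \<Longrightarrow> j \<le> n \<Longrightarrow> w i j \<ge> 0"
    and "weight_graph_connected n w"
  shows "\<exists>\<gamma>0 \<ge> 0. \<forall>\<gamma> \<ge> \<gamma>0. \<forall>U :: nat \<Rightarrow> real^'p.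
           clust_obj N n w x \<gamma> (\<lambda>i. mean_vec n x) \<le> clust_obj N n w x \<gamma> U"
proof (cases "n = 0")
  case True
  then have "ordered_pairs n = {}" by (simp add: ordered_pairs_def)
  with True show ?thesis
    by (intro exI[of _ 0]) (simp add: clust_obj_eq_fusion_penalty fusion_penalty_def)
next
  case False
  define a where "a = (\<lambda>i. x i - mean_vec n x)"
  obtain G where G: "G \<ge> 0" "\<And>U. (\<Sum>i=1..n. a i \<bullet> (U i - U 1)) \<le> G * fusion_penalty N n w U"
    using inner_sum_le_fusion_penalty[OF assms] by blast
  have "clust_obj N n w x \<gamma> (\<lambda>i. mean_vec n x) \<le> clust_obj N n w x \<gamma> U"
    if "G \<le> \<gamma>" for \<gamma> U
  proof -
    have "G * fusion_penalty N n w U \<le> \<gamma> * fusion_penalty N n w U"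
      using that fusion_penalty_nonneg[OF assms(1,2)] by (rule mult_right_mono)
    then show ?thesis
      using sum_sq_dist_ge[of n x U] G(2)[of U] False
      by (simp add: clust_obj_eq_fusion_penalty fusion_penalty_def is_norm_zero[OF assms(1)] a_def)
  qed
  with G(1) show ?thesis by blast
qed

end
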